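(* Let $n,t\ge1$. For each $1\le k\le n$ let $\bm{X}^k=(X_1^k,\dots,X_t^k)$ be a random vector, fix an index $1\le i\le n$, and let $\widetilde{\bm{X}}^i=(\widetilde{X}_1^i,\dots,\widetilde{X}_t^i)$ be another random vector. Assume spatial independence: $\bm{X}^1,\dots,\bm{X}^n$ are mutually independent, and $\bm{X}^1,\dots,\bm{X}^{i-1},\widetilde{\bm{X}}^i,\bm{X}^{i+1},\dots,\bm{X}^n$ are mutually independent. Let $f_j\in\mathfrak{F}_{USIA}$ for $1\le j\le t$, and set $X_j=f_j(X_j^1,\dots,X_j^n)$ and $\widetilde{X}_j=f_j(X_j^1,\dots,X_j^{i-1},\widetilde{X}_j^i,X_j^{i+1},\dots,X_j^n)$. If $\bm{X}^i\le_{dcx}\widetilde{\bm{X}}^i$ and $\bm{X}^i$ and $\widetilde{\bm{X}}^i$ have a common conditionally increasing copula, then $$(X_1,\dots,X_t)\le_{dcx}(\widetilde{X}_1,\dots,\widetilde{X}_t)\quad\text{and}\quad \sum_{j=1}^t\alpha_jX_j\le_{cx}\sum_{j=1}^t\alpha_j\widetilde{X}_j$$ for all $\alpha_1,\dots,\alpha_t\ge0$.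
   Context: $\mathfrak{F}_{USIA}$ is the set of functions $f:\mathbb{R}^n\to\mathbb{R}$ such that for every $\bm{x}\in\mathbb{R}^n$ and every coordinate $i$, the map $x_i\mapsto f(\bm{x})$ (other coordinates fixed) is affine and strictly increasing. A function $\phi:\mathbb{R}^t\to\mathbb{R}$ is directionally convex if it is supermodular and convex in each coordinate. $\bm{X}\le_{dcx}\bm{Y}$ means $\mathbb{E}\phi(\bm{X})\le\mathbb{E}\phi(\bm{Y})$ for all directionally convex $\phi$ for which the expectations exist; $X\le_{cx}Y$ (real) means $\mathbb{E}\phi(X)\le\mathbb{E}\phi(Y)$ for all convex $\phi$. A copula $C$ is conditionally increasing if a random vector $\bm{U}$ with distribution $C$ satisfies: for every $i$ and every index set $J\not\ni i$, $\mathbb{E}[\psi(U_i)\mid U_j,j\in J]$ is increasing in $(U_j)_{j\in J}$ for every increasing $\psi$. *)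

theory Defs
  imports "HOL-Probability.Probability"
begin

text \<open>Vectors in R^n / R^t are represented by real^'n / real^'t (dimension = CARD of the index type).\<close>

definition upd_vec :: "real^'n \<Rightarrow> 'n \<Rightarrow> real \<Rightarrow> real^'n" where
  "upd_vec x i s = (\<chi> k. if k = i then s else x $ k)"

definition F_USIA :: "(real^'n \<Rightarrow> real) set" where
  "F_USIA = {f. \<forall>x i. (\<exists>a b. \<forall>s. f (upd_vec x i s) = a * s + b)
                     \<and> strict_mono (\<lambda>s. f (upd_vec x i s))}"

definition supermodular :: "(real^'t \<Rightarrow> real) \<Rightarrow> bool" where
  "supermodular \<phi> \<longleftrightarrow> (\<forall>x y. \<phi> x + \<phi> y \<le>
      \<phi> (\<chi> j. max (x $ j) (y $ j)) + \<phi> (\<chi> j. min (x $ j) (y $ j)))"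

definition dir_convex :: "(real^'t \<Rightarrow> real) \<Rightarrow> bool" where
  "dir_convex \<phi> \<longleftrightarrow> supermodular \<phi> \<and> (\<forall>x j. convex_on UNIV (\<lambda>s. \<phi> (upd_vec x j s)))"

definition dcx_le :: "'a measure \<Rightarrow> ('a \<Rightarrow> real^'t) \<Rightarrow> ('a \<Rightarrow> real^'t) \<Rightarrow> bool" where
  "dcx_le M X Y \<longleftrightarrow> (\<forall>\<phi>. dir_convex \<phi> \<longrightarrow> integrable M (\<lambda>\<omega>. \<phi> (X \<omega>)) \<longrightarrow>
      integrable M (\<lambda>\<omega>. \<phi> (Y \<omega>)) \<longrightarrow>
      (\<integral>\<omega>. \<phi> (X \<omega>) \<partial>M) \<le> (\<integral>\<omega>. \<phi> (Y \<omega>) \<partial>M))"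

definition cx_le :: "'a measure \<Rightarrow> ('a \<Rightarrow> real) \<Rightarrow> ('a \<Rightarrow> real) \<Rightarrow> bool" where
  "cx_le M X Y \<longleftrightarrow> (\<forall>\<phi>. convex_on UNIV \<phi> \<longrightarrow> integrable M (\<lambda>\<omega>. \<phi> (X \<omega>)) \<longrightarrow>
      integrable M (\<lambda>\<omega>. \<phi> (Y \<omega>)) \<longrightarrow>
      (\<integral>\<omega>. \<phi> (X \<omega>) \<partial>M) \<le> (\<integral>\<omega>. \<phi> (Y \<omega>) \<partial>M))"

text \<open>A copula, represented by its probability distribution on R^t: uniform [0,1] marginals.\<close>
definition is_copula :: "(real^'t) measure \<Rightarrow> bool" where
  "is_copula C \<longleftrightarrow> prob_space C \<and> sets C = sets borel \<and>
     (\<forall>j. \<forall>x\<in>{0..1}. measure C {u. u $ j \<le> x} = x)"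

definition copula_of :: "'a measure \<Rightarrow> ('a \<Rightarrow> real^'t) \<Rightarrow> (real^'t) measure \<Rightarrow> bool" where
  "copula_of M X C \<longleftrightarrow> is_copula C \<and> (\<forall>x.
     measure M {\<omega>\<in>space M. \<forall>j. X \<omega> $ j \<le> x $ j} =
     measure C {u. \<forall>j. u $ j \<le> measure M {\<omega>\<in>space M. X \<omega> $ j \<le> x $ j}})"

definition coord_algebra :: "(real^'t) measure \<Rightarrow> 't set \<Rightarrow> (real^'t) measure" where
  "coord_algebra C J = vimage_algebra (space C) (\<lambda>u. \<chi> j. if j \<in> J then u $ j else 0) borel"

definition cond_increasing :: "(real^'t) measure \<Rightarrow> bool" where
  "cond_increasing C \<longleftrightarrow> (\<forall>i J (\<psi>::real \<Rightarrow> real). i \<notin> J \<longrightarrow> mono \<psi> \<longrightarrow>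
     integrable C (\<lambda>u. \<psi> (u $ i)) \<longrightarrow>
     (\<exists>g. (\<forall>u v. (\<forall>j\<in>J. u $ j \<le> v $ j) \<longrightarrow> g u \<le> g v) \<and>
          (AE u in C. real_cond_exp C (coord_algebra C J) (\<lambda>u. \<psi> (u $ i)) u = g u)))"

end

theory Submission
  imports Defs
begin

(* Condition on the vectors X^k, k ~= i, which are independent both of X^i and of its replacement.
   For fixed values of them every f_j is affine and strictly increasing in its i-th argument, so
   (X_1, ..., X_t) is a coordinatewise increasing affine image of X^i (resp. of the replacement).
   Such maps preserve directional convexity, so the dcx comparison holds conditionally and, by
   Fubini, unconditionally.  The cx statement follows because psi (sum_j alpha_j x_j) is
   directionally convex for convex psi and nonnegative alpha. *)

lemma upd_vec_nth [simp]: "upd_vec x a s $ k = (if k = a then s else x $ k)"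
  by (simp add: upd_vec_def)

lemma upd_vec_nth_self [simp]: "upd_vec x a (x $ a) = x"
  by (simp add: vec_eq_iff)

lemma borel_measurable_vec_lambda:
  fixes g :: "'a \<Rightarrow> 'k::finite \<Rightarrow> real"
  assumes "\<And>k. (\<lambda>x. g x k) \<in> borel_measurable M"
  shows "(\<lambda>x. \<chi> k. g x k) \<in> borel_measurable M"
proof (rule borel_measurable_euclidean_space[THEN iffD2], intro ballI)
  fix b :: "real^'k" assume "b \<in> Basis"
  then obtain k where "b = axis k 1" unfolding Basis_vec_def by auto
  then show "(\<lambda>x. (\<chi> k. g x k) \<bullet> b) \<in> borel_measurable M"
    using assms by (simp add: inner_axis)
qed

lemma LIMSEQ_floor_mult_div:
  fixes s :: real
  shows "(\<lambda>m. \<lfloor>real (Suc m) * s\<rfloor> / real (Suc m)) \<longlonglongrightarrow> s"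
proof (rule real_tendsto_sandwich[where f="\<lambda>m. s - 1 / real (Suc m)" and h="\<lambda>m. s"])
  have "s - 1 / real (Suc m) = (real (Suc m) * s - 1) / real (Suc m)" for m
    by (simp add: field_simps)
  then show "\<forall>\<^sub>F m in sequentially. s - 1 / real (Suc m) \<le> \<lfloor>real (Suc m) * s\<rfloor> / real (Suc m)"
    by (intro always_eventually allI) (simp add: divide_right_mono)
  show "\<forall>\<^sub>F m in sequentially. \<lfloor>real (Suc m) * s\<rfloor> / real (Suc m) \<le> s"
    by (intro always_eventually allI) (simp add: pos_divide_le_eq mult.commute)
  show "(\<lambda>m. s - 1 / real (Suc m)) \<longlonglongrightarrow> s"
    using tendsto_diff[OF tendsto_const lim_inverse_n'[THEN LIMSEQ_Suc]]
    by (simp add: inverse_eq_divide)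
qed simp

text \<open>Rounding the \<open>a\<close>-th coordinate down to the grid \<open>\<int> / (m + 1)\<close> makes \<open>h\<close> a countable
  patchwork of measurable sections; continuity in that coordinate recovers \<open>h\<close> in the limit.\<close>

lemma borel_measurable_continuous_in_coordinate:
  fixes h :: "real^'n::finite \<Rightarrow> real"
  assumes sections: "\<And>s. (\<lambda>x. h (upd_vec x a s)) \<in> borel_measurable borel"
    and cont: "\<And>x. continuous_on UNIV (\<lambda>s. h (upd_vec x a s))"
  shows "h \<in> borel_measurable borel"
proof (rule borel_measurable_LIMSEQ_real)
  define r where "r m x = \<lfloor>real (Suc m) * x $ a\<rfloor>" for m and x :: "real^'n"
  show "(\<lambda>x. h (upd_vec x a (r m x / real (Suc m)))) \<in> borel_measurable borel" for m
  proof (rule measurable_compose_countable'[where I=UNIV and g="r m"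
        and f="\<lambda>z x. h (upd_vec x a (z / real (Suc m)))"])
    show "r m \<in> measurable borel (count_space UNIV)"
      unfolding r_def by measurable
  qed (simp_all add: sections)
  fix x :: "real^'n"
  have "isCont (\<lambda>s. h (upd_vec x a s)) (x $ a)"
    using cont[of x] by (simp add: continuous_on_eq_continuous_at)
  then show "(\<lambda>m. h (upd_vec x a (r m x / real (Suc m)))) \<longlonglongrightarrow> h x"
    unfolding r_def using isCont_tendsto_compose[OF _ LIMSEQ_floor_mult_div] by fastforce
qed

lemma borel_measurable_separately_continuous:
  fixes h :: "real^'n::finite \<Rightarrow> real"
  assumes cont: "\<And>x k. continuous_on UNIV (\<lambda>s. h (upd_vec x k s))"
  shows "h \<in> borel_measurable borel"
proof -
  have "(\<lambda>x. h (\<chi> k. if k \<in> S then x $ k else x0 $ k)) \<in> borel_measurable borel"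
    if "finite S" for S x0
    using that
  proof (induction S arbitrary: x0)
    case empty
    then show ?case by simp
  next
    case (insert a S)
    show ?case
    proof (rule borel_measurable_continuous_in_coordinate[where a=a])
      have "(\<chi> k. if k \<in> insert a S then upd_vec x a s $ k else x0 $ k)
          = (\<chi> k. if k \<in> S then x $ k else upd_vec x0 a s $ k)" for x s
        using insert.hyps by (auto simp: vec_eq_iff)
      then show "(\<lambda>x. h (\<chi> k. if k \<in> insert a S then upd_vec x a s $ k else x0 $ k))
          \<in> borel_measurable borel" for s
        using insert.IH by simp
      have "(\<chi> k. if k \<in> insert a S then upd_vec x a s $ k else x0 $ k)
          = upd_vec (\<chi> k. if k \<in> insert a S then x $ k else x0 $ k) a s" for x s
        by (simp add: vec_eq_iff)
      then show "continuous_on UNIV (\<lambda>s. h (\<chi> k. if k \<in> insert a S then upd_vec x a s $ k else x0 $ k))"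
        for x
        using cont by simp
    qed
  qed
  from this[of UNIV] show ?thesis by simp
qed

lemma F_USIA_section_affine:
  assumes "f \<in> F_USIA"
  obtains a b where "0 < a" "\<And>s. f (upd_vec x k s) = a * s + b"
proof -
  from assms obtain a b where ab: "\<And>s. f (upd_vec x k s) = a * s + b"
    and mono: "strict_mono (\<lambda>s. f (upd_vec x k s))"
    unfolding F_USIA_def by blast
  from mono have "f (upd_vec x k 0) < f (upd_vec x k 1)"
    by (rule strict_monoD) simp
  with ab have "0 < a" by simp
  then show thesis by (rule that[OF _ ab])
qed

lemma F_USIA_borel_measurable:
  assumes "f \<in> F_USIA"
  shows "f \<in> borel_measurable borel"
proof (rule borel_measurable_separately_continuous)
  fix x k
  obtain a b where "\<And>s. f (upd_vec x k s) = a * s + b"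
    using F_USIA_section_affine[OF assms] by metis
  then show "continuous_on UNIV (\<lambda>s. f (upd_vec x k s))"
    by (simp add: continuous_intros)
qed

lemma dir_convex_borel_measurable:
  assumes "dir_convex \<phi>"
  shows "\<phi> \<in> borel_measurable borel"
  using assms unfolding dir_convex_def
  by (intro borel_measurable_separately_continuous convex_on_continuous) auto

lemma convex_on_compose_affine:
  fixes g :: "real \<Rightarrow> real"
  assumes "convex_on UNIV g"
  shows "convex_on UNIV (\<lambda>s. g (c * s + d))"
proof (rule convex_onI)
  fix t x y :: real assume "0 < t" "t < 1"
  moreover have "c * ((1 - t) *\<^sub>R x + t *\<^sub>R y) + d = (1 - t) *\<^sub>R (c * x + d) + t *\<^sub>R (c * y + d)"
    by (simp add: algebra_simps)
  ultimately show "g (c * ((1 - t) *\<^sub>R x + t *\<^sub>R y) + d) \<le> (1 - t) * g (c * x + d) + t * g (c * y + d)"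
    using convex_onD[OF assms, of t "c * x + d" "c * y + d"] by simp
qed simp

text \<open>Both \<open>p\<close> and \<open>q\<close> are the same convex combination of \<open>l\<close> and \<open>u\<close>, taken with swapped weights.\<close>

lemma convex_on_add_le_extremes:
  fixes g :: "real \<Rightarrow> real"
  assumes g: "convex_on UNIV g" and "l \<le> p" "p \<le> u" "l \<le> q" "q \<le> u" and "p + q = u + l"
  shows "g p + g q \<le> g u + g l"
proof (cases "l = u")
  case True
  with assms show ?thesis by simp
next
  case False
  define t where "t = (p - l) / (u - l)"
  have "0 \<le> t" "t \<le> 1" "t * (u - l) = p - l"
    using assms False by (auto simp: t_def field_simps)
  then have "p = (1 - t) *\<^sub>R l + t *\<^sub>R u" "q = (1 - t) *\<^sub>R u + t *\<^sub>R l"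
    using \<open>p + q = u + l\<close> by (simp_all add: algebra_simps)
  then have "g p \<le> (1 - t) * g l + t * g u" "g q \<le> (1 - t) * g u + t * g l"
    using convex_onD[OF g \<open>0 \<le> t\<close> \<open>t \<le> 1\<close>] by simp_all
  then show ?thesis by (simp add: algebra_simps)
qed

lemma dir_convex_compose_pos_affine:
  fixes \<phi> :: "real^'t::finite \<Rightarrow> real"
  assumes dc: "dir_convex \<phi>" and pos: "\<And>j. 0 < a j"
  shows "dir_convex (\<lambda>v. \<phi> (\<chi> j. a j * v $ j + b j))"
  unfolding dir_convex_def
proof safe
  let ?A = "\<lambda>v::real^'t. \<chi> j. a j * v $ j + b j"
  show "supermodular (\<lambda>v. \<phi> (?A v))"
    unfolding supermodular_def
  proof (intro allI)
    fix x y :: "real^'t"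
    have max: "?A (\<chi> j. max (x $ j) (y $ j)) = (\<chi> j. max (?A x $ j) (?A y $ j))"
      and min: "?A (\<chi> j. min (x $ j) (y $ j)) = (\<chi> j. min (?A x $ j) (?A y $ j))"
      using pos by (simp_all add: vec_eq_iff max_def min_def)
    from dc have "\<phi> (?A x) + \<phi> (?A y) \<le> \<phi> (\<chi> j. max (?A x $ j) (?A y $ j)) + \<phi> (\<chi> j. min (?A x $ j) (?A y $ j))"
      unfolding dir_convex_def supermodular_def by blast
    then show "\<phi> (?A x) + \<phi> (?A y) \<le> \<phi> (?A (\<chi> j. max (x $ j) (y $ j))) + \<phi> (?A (\<chi> j. min (x $ j) (y $ j)))"
      by (simp only: max min)
  qed
  fix x :: "real^'t" and k
  have "?A (upd_vec x k s) = upd_vec (?A x) k (a k * s + b k)" for s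
    by (simp add: vec_eq_iff)
  moreover have "convex_on UNIV (\<lambda>s. \<phi> (upd_vec (?A x) k (a k * s + b k)))"
    using dc unfolding dir_convex_def by (intro convex_on_compose_affine) blast
  ultimately show "convex_on UNIV (\<lambda>s. \<phi> (?A (upd_vec x k s)))"
    by simp
qed

definition aggregate_with :: "('t::finite \<Rightarrow> real^'n::finite \<Rightarrow> real) \<Rightarrow> 'n \<Rightarrow> ('n \<Rightarrow> real^'t) \<Rightarrow> real^'t \<Rightarrow> real^'t"
  where "aggregate_with f i y v = (\<chi> j. f j (\<chi> k. if k = i then v $ j else y k $ j))"

lemma dir_convex_compose_aggregate_with:
  assumes "dir_convex \<phi>" and "\<And>j. f j \<in> F_USIA"
  shows "dir_convex (\<lambda>v. \<phi> (aggregate_with f i y v))"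
proof -
  have "\<exists>a b. 0 < a \<and> (\<forall>s. f j (upd_vec (\<chi> k. y k $ j) i s) = a * s + b)" for j
    using F_USIA_section_affine[OF assms(2)] by metis
  then obtain a b where "\<And>j. 0 < a j" and ab: "\<And>j s. f j (upd_vec (\<chi> k. y k $ j) i s) = a j * s + b j"
    by metis
  have "(\<chi> k. if k = i then v $ j else y k $ j) = upd_vec (\<chi> k. y k $ j) i (v $ j)" for v j
    by (simp add: vec_eq_iff)
  then have "aggregate_with f i y v = (\<chi> j. a j * v $ j + b j)" for v
    by (simp add: aggregate_with_def ab)
  with dir_convex_compose_pos_affine[OF assms(1) \<open>\<And>j. 0 < a j\<close>] show ?thesis
    by simp
qed

lemma aggregate_with_borel_measurable:
  fixes f :: "'t::finite \<Rightarrow> real^'n::finite \<Rightarrow> real"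
  assumes "\<And>j. f j \<in> F_USIA"
  shows "(\<lambda>z. aggregate_with f i (fst z) (snd z)) \<in> borel_measurable (Pi\<^sub>M (-{i}) (\<lambda>_. borel) \<Otimes>\<^sub>M borel)"
proof -
  have "(\<lambda>z :: ('n \<Rightarrow> real^'t) \<times> (real^'t). if k = i then snd z $ j else fst z k $ j)
      \<in> borel_measurable (Pi\<^sub>M (-{i}) (\<lambda>_. borel) \<Otimes>\<^sub>M borel)" for k j
  proof (cases "k = i")
    case True
    show ?thesis
      unfolding if_P[OF True] by (rule measurable_compose[OF measurable_snd borel_measurable_nth])
  next
    case False
    then have "(\<lambda>y. y k) \<in> measurable (Pi\<^sub>M (-{i}) (\<lambda>_. borel)) borel"
      by (intro measurable_component_singleton) simp
    then show ?thesis
      unfolding if_not_P[OF False]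
      by (rule measurable_compose[OF measurable_compose[OF measurable_fst] borel_measurable_nth])
  qed
  then show ?thesis
    unfolding aggregate_with_def using F_USIA_borel_measurable[OF assms]
    by (intro borel_measurable_vec_lambda measurable_compose[OF borel_measurable_vec_lambda])
qed

lemma dir_convex_convex_weighted_sum:
  fixes \<psi> :: "real \<Rightarrow> real" and \<alpha> :: "'t::finite \<Rightarrow> real"
  assumes cvx: "convex_on UNIV \<psi>" and nonneg: "\<And>j. 0 \<le> \<alpha> j"
  shows "dir_convex (\<lambda>x::real^'t. \<psi> (\<Sum>j\<in>UNIV. \<alpha> j * x $ j))"
  unfolding dir_convex_def
proof safe
  let ?L = "\<lambda>x::real^'t. \<Sum>j\<in>UNIV. \<alpha> j * x $ j"
  show "supermodular (\<lambda>x. \<psi> (?L x))"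
    unfolding supermodular_def
  proof (intro allI)
    fix x y :: "real^'t"
    let ?max = "\<chi> j. max (x $ j) (y $ j)" and ?min = "\<chi> j. min (x $ j) (y $ j)"
    have "\<alpha> j * x $ j + \<alpha> j * y $ j = \<alpha> j * ?max $ j + \<alpha> j * ?min $ j" for j
      by (simp add: max_def min_def algebra_simps)
    then have "?L x + ?L y = ?L ?max + ?L ?min"
      by (simp add: sum.distrib[symmetric])
    moreover have "?L ?min \<le> ?L x" "?L ?min \<le> ?L y" "?L x \<le> ?L ?max" "?L y \<le> ?L ?max"
      using nonneg by (auto intro!: sum_mono mult_left_mono)
    ultimately show "\<psi> (?L x) + \<psi> (?L y) \<le> \<psi> (?L ?max) + \<psi> (?L ?min)"
      by (intro convex_on_add_le_extremes[OF cvx])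
  qed
  fix x :: "real^'t" and k
  have "?L (upd_vec x k s) = \<alpha> k * s + (\<Sum>j\<in>UNIV-{k}. \<alpha> j * x $ j)" for s
    by (simp add: sum.remove[of UNIV k] cong: sum.cong_simp)
  then show "convex_on UNIV (\<lambda>s. \<psi> (?L (upd_vec x k s)))"
    using convex_on_compose_affine[OF cvx] by simp
qed

lemma cx_le_weighted_sum_if_dcx_le:
  fixes X Y :: "'a \<Rightarrow> real^'t::finite"
  assumes "dcx_le M X Y" and "\<And>j. 0 \<le> \<alpha> j"
  shows "cx_le M (\<lambda>\<omega>. \<Sum>j\<in>UNIV. \<alpha> j * X \<omega> $ j) (\<lambda>\<omega>. \<Sum>j\<in>UNIV. \<alpha> j * Y \<omega> $ j)"
  using assms dir_convex_convex_weighted_sum unfolding cx_le_def dcx_le_def by blast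

text \<open>Independence of the remaining coordinates from the \<open>i\<close>-th one is stated as a factorisation of
  the joint law, because \<open>indep_var\<close> forces both variables to take values in the same type.\<close>

lemma (in prob_space) indep_vars_distr_Compl_component:
  fixes i :: 'i and X :: "'i \<Rightarrow> 'a \<Rightarrow> 'b"
  assumes "indep_vars (\<lambda>_. N) X UNIV"
  defines "S \<equiv> Pi\<^sub>M (-{i}) (\<lambda>_. N)" and "Y \<equiv> \<lambda>\<omega>. restrict (\<lambda>k. X k \<omega>) (-{i})"
  shows "distr M (S \<Otimes>\<^sub>M N) (\<lambda>\<omega>. (Y \<omega>, X i \<omega>)) = distr M S Y \<Otimes>\<^sub>M distr M N (X i)"
proof -
  define T where "T = Pi\<^sub>M {i} (\<lambda>_. N)"
  define R where "R \<omega> = restrict (\<lambda>k. X k \<omega>) {i}" for \<omega>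
  have "indep_var S Y T R"
    unfolding S_def Y_def T_def R_def by (rule indep_var_restrict[OF assms(1)]) auto
  then have Y: "Y \<in> measurable M S" and R: "R \<in> measurable M T"
    and law: "distr M S Y \<Otimes>\<^sub>M distr M T R = distr M (S \<Otimes>\<^sub>M T) (\<lambda>\<omega>. (Y \<omega>, R \<omega>))"
    by (simp_all add: indep_var_distribution_eq)
  have proj: "(\<lambda>z. z i) \<in> measurable T N"
    unfolding T_def by (rule measurable_component_singleton) simp
  interpret PR: prob_space "distr M T R" using R by (rule prob_space_distr)
  interpret PRi: prob_space "distr (distr M T R) N (\<lambda>z. z i)" using proj by (intro PR.prob_space_distr) simp
  have "distr M S Y \<Otimes>\<^sub>M distr M N (X i) = distr M S Y \<Otimes>\<^sub>M distr (distr M T R) N (\<lambda>z. z i)"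
    using proj R by (simp add: distr_distr comp_def R_def)
  also have "\<dots> = distr (distr M S Y \<Otimes>\<^sub>M distr M T R) (S \<Otimes>\<^sub>M N) (\<lambda>(y, z). (y, z i))"
  proof -
    have ident: "(\<lambda>y. y) \<in> measurable (distr M S Y) S"
      by (rule measurable_ident_sets) simp
    have proj': "(\<lambda>z. z i) \<in> measurable (distr M T R) N"
      using proj by simp
    have "distr (distr M S Y) S (\<lambda>y. y) = distr M S Y"
      by (rule distr_id2) (rule sets_distr[symmetric])
    then show ?thesis
      using pair_measure_distr[OF ident proj' PRi.sigma_finite_measure_axioms] by (simp only:)
  qed
  also have "\<dots> = distr M (S \<Otimes>\<^sub>M N) (\<lambda>\<omega>. (Y \<omega>, X i \<omega>))"
  proof -
    have YR: "(\<lambda>\<omega>. (Y \<omega>, R \<omega>)) \<in> measurable M (S \<Otimes>\<^sub>M T)"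
      using Y R by (rule measurable_Pair)
    have proj2: "(\<lambda>(y, z). (y, z i)) \<in> measurable (S \<Otimes>\<^sub>M T) (S \<Otimes>\<^sub>M N)"
      unfolding case_prod_beta using proj
      by (intro measurable_Pair measurable_fst measurable_compose[OF measurable_snd])
    have "(\<lambda>(y, z). (y, z i)) \<circ> (\<lambda>\<omega>. (Y \<omega>, R \<omega>)) = (\<lambda>\<omega>. (Y \<omega>, X i \<omega>))"
      by (simp add: fun_eq_iff R_def)
    then show ?thesis
      unfolding law distr_distr[OF proj2 YR] by (simp only:)
  qed
  finally show ?thesis by (rule sym)
qed

lemma (in prob_space) integral_product_law_sections:
  fixes G :: "'b \<times> 'c \<Rightarrow> real"
  assumes Y: "Y \<in> measurable M S" and Z: "Z \<in> measurable M T"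
    and law: "distr M (S \<Otimes>\<^sub>M T) (\<lambda>\<omega>. (Y \<omega>, Z \<omega>)) = distr M S Y \<Otimes>\<^sub>M distr M T Z"
    and G: "G \<in> borel_measurable (S \<Otimes>\<^sub>M T)"
    and int: "integrable M (\<lambda>\<omega>. G (Y \<omega>, Z \<omega>))"
  shows "AE y in distr M S Y. integrable M (\<lambda>\<omega>. G (y, Z \<omega>))"
    and "integrable (distr M S Y) (\<lambda>y. \<integral>\<omega>. G (y, Z \<omega>) \<partial>M)"
    and "(\<integral>\<omega>. G (Y \<omega>, Z \<omega>) \<partial>M) = (\<integral>y. (\<integral>\<omega>. G (y, Z \<omega>) \<partial>M) \<partial>distr M S Y)"
proof -
  have YZ: "(\<lambda>\<omega>. (Y \<omega>, Z \<omega>)) \<in> measurable M (S \<Otimes>\<^sub>M T)"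
    using Y Z by measurable
  interpret PY: prob_space "distr M S Y" using Y by (rule prob_space_distr)
  interpret PZ: prob_space "distr M T Z" using Z by (rule prob_space_distr)
  interpret pair_sigma_finite "distr M S Y" "distr M T Z" ..
  have int_product: "integrable (distr M S Y \<Otimes>\<^sub>M distr M T Z) G"
    unfolding law[symmetric] using int by (simp add: integrable_distr_eq[OF YZ G])
  have G_section: "(\<lambda>v. G (y, v)) \<in> borel_measurable T" if "y \<in> space S" for y
    using measurable_Pair2[OF G that] .
  have section_int: "integrable (distr M T Z) (\<lambda>v. G (y, v)) \<longleftrightarrow> integrable M (\<lambda>\<omega>. G (y, Z \<omega>))"
    and section_integral: "(\<integral>v. G (y, v) \<partial>distr M T Z) = (\<integral>\<omega>. G (y, Z \<omega>) \<partial>M)"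
    if "y \<in> space S" for y
    using integrable_distr_eq[OF Z G_section[OF that]] integral_distr[OF Z G_section[OF that]] by auto
  show "AE y in distr M S Y. integrable M (\<lambda>\<omega>. G (y, Z \<omega>))"
    using AE_integrable_fst'[OF int_product] AE_space by eventually_elim (simp add: section_int)
  show "integrable (distr M S Y) (\<lambda>y. \<integral>\<omega>. G (y, Z \<omega>) \<partial>M)"
    using integrable_fst'[OF int_product]
    by (rule Bochner_Integration.integrable_cong[THEN iffD1, rotated 2]) (simp_all add: section_integral)
  have "(\<integral>\<omega>. G (Y \<omega>, Z \<omega>) \<partial>M) = integral\<^sup>L (distr M S Y \<Otimes>\<^sub>M distr M T Z) G"
    unfolding law[symmetric] by (rule integral_distr[OF YZ G, symmetric])
  also have "\<dots> = (\<integral>y. (\<integral>v. G (y, v) \<partial>distr M T Z) \<partial>distr M S Y)"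
    using integral_fst'[OF int_product] by simp
  also have "\<dots> = (\<integral>y. (\<integral>\<omega>. G (y, Z \<omega>) \<partial>M) \<partial>distr M S Y)"
    by (rule Bochner_Integration.integral_cong) (simp_all add: section_integral)
  finally show "(\<integral>\<omega>. G (Y \<omega>, Z \<omega>) \<partial>M) = (\<integral>y. (\<integral>\<omega>. G (y, Z \<omega>) \<partial>M) \<partial>distr M S Y)" .
qed

lemma (in prob_space) integral_mono_product_law_sections:
  fixes G :: "'b \<times> 'c \<Rightarrow> real"
  assumes Y: "Y \<in> measurable M S" and Z: "Z \<in> measurable M T" "Z' \<in> measurable M T"
    and law: "distr M (S \<Otimes>\<^sub>M T) (\<lambda>\<omega>. (Y \<omega>, Z \<omega>)) = distr M S Y \<Otimes>\<^sub>M distr M T Z"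
      "distr M (S \<Otimes>\<^sub>M T) (\<lambda>\<omega>. (Y \<omega>, Z' \<omega>)) = distr M S Y \<Otimes>\<^sub>M distr M T Z'"
    and G: "G \<in> borel_measurable (S \<Otimes>\<^sub>M T)"
    and int: "integrable M (\<lambda>\<omega>. G (Y \<omega>, Z \<omega>))" "integrable M (\<lambda>\<omega>. G (Y \<omega>, Z' \<omega>))"
    and mono: "\<And>y. y \<in> space S \<Longrightarrow> integrable M (\<lambda>\<omega>. G (y, Z \<omega>)) \<Longrightarrow>
      integrable M (\<lambda>\<omega>. G (y, Z' \<omega>)) \<Longrightarrow> (\<integral>\<omega>. G (y, Z \<omega>) \<partial>M) \<le> (\<integral>\<omega>. G (y, Z' \<omega>) \<partial>M)"
  shows "(\<integral>\<omega>. G (Y \<omega>, Z \<omega>) \<partial>M) \<le> (\<integral>\<omega>. G (Y \<omega>, Z' \<omega>) \<partial>M)"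
proof -
  note sections = integral_product_law_sections[OF Y Z(1) law(1) G int(1)]
    integral_product_law_sections[OF Y Z(2) law(2) G int(2)]
  have "AE y in distr M S Y. (\<integral>\<omega>. G (y, Z \<omega>) \<partial>M) \<le> (\<integral>\<omega>. G (y, Z' \<omega>) \<partial>M)"
    using sections(1) sections(4) AE_space by eventually_elim (simp add: mono)
  then show ?thesis
    unfolding sections(3) sections(6) by (rule integral_mono_AE[OF sections(2) sections(5)])
qed

lemma (in prob_space) dcx_le_product_law_mixture:
  fixes H :: "'b \<times> (real^'t::finite) \<Rightarrow> real^'s::finite"
  assumes Y: "Y \<in> measurable M S" and Z: "Z \<in> borel_measurable M" "Z' \<in> borel_measurable M"
    and law: "distr M (S \<Otimes>\<^sub>M borel) (\<lambda>\<omega>. (Y \<omega>, Z \<omega>)) = distr M S Y \<Otimes>\<^sub>M distr M borel Z"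
      "distr M (S \<Otimes>\<^sub>M borel) (\<lambda>\<omega>. (Y \<omega>, Z' \<omega>)) = distr M S Y \<Otimes>\<^sub>M distr M borel Z'"
    and dcx: "dcx_le M Z Z'"
    and H: "H \<in> borel_measurable (S \<Otimes>\<^sub>M borel)"
    and sections: "\<And>y \<phi>. y \<in> space S \<Longrightarrow> dir_convex \<phi> \<Longrightarrow> dir_convex (\<lambda>v. \<phi> (H (y, v)))"
  shows "dcx_le M (\<lambda>\<omega>. H (Y \<omega>, Z \<omega>)) (\<lambda>\<omega>. H (Y \<omega>, Z' \<omega>))"
  unfolding dcx_le_def
proof (intro allI impI)
  fix \<phi> :: "real^'s \<Rightarrow> real"
  assume "dir_convex \<phi>"
    and "integrable M (\<lambda>\<omega>. \<phi> (H (Y \<omega>, Z \<omega>)))" "integrable M (\<lambda>\<omega>. \<phi> (H (Y \<omega>, Z' \<omega>)))"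
  then show "(\<integral>\<omega>. \<phi> (H (Y \<omega>, Z \<omega>)) \<partial>M) \<le> (\<integral>\<omega>. \<phi> (H (Y \<omega>, Z' \<omega>)) \<partial>M)"
    using dcx sections measurable_compose[OF H dir_convex_borel_measurable]
    by (intro integral_mono_product_law_sections[OF Y Z law, where G="\<lambda>z. \<phi> (H z)"])
      (auto simp: dcx_le_def)
qed

theorem theorem15:
  fixes M :: "'a measure"
    and X :: "'n::finite \<Rightarrow> 'a \<Rightarrow> real^'t::finite"
    and Xt :: "'a \<Rightarrow> real^'t"
    and i :: 'n
    and f :: "'t \<Rightarrow> real^'n \<Rightarrow> real"
  assumes "prob_space M"
    and "\<And>k. X k \<in> borel_measurable M"
    and "Xt \<in> borel_measurable M"
    and "prob_space.indep_vars M (\<lambda>_. borel) X UNIV"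
    and "prob_space.indep_vars M (\<lambda>_. borel) (\<lambda>k. if k = i then Xt else X k) UNIV"
    and "\<And>j. f j \<in> F_USIA"
    and "dcx_le M (X i) Xt"
    and "\<exists>C. cond_increasing C \<and> copula_of M (X i) C \<and> copula_of M Xt C"
  shows "dcx_le M (\<lambda>\<omega>. \<chi> j. f j (\<chi> k. X k \<omega> $ j))
                  (\<lambda>\<omega>. \<chi> j. f j (\<chi> k. if k = i then Xt \<omega> $ j else X k \<omega> $ j))
       \<and> (\<forall>\<alpha>::'t \<Rightarrow> real. (\<forall>j. 0 \<le> \<alpha> j) \<longrightarrow>
            cx_le M (\<lambda>\<omega>. \<Sum>j\<in>UNIV. \<alpha> j * f j (\<chi> k. X k \<omega> $ j))
                    (\<lambda>\<omega>. \<Sum>j\<in>UNIV. \<alpha> j * f j (\<chi> k. if k = i then Xt \<omega> $ j else X k \<omega> $ j)))"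
proof -
  interpret prob_space M by fact
  define S where "S = Pi\<^sub>M (-{i}) (\<lambda>_. borel :: (real^'t) measure)"
  define Y where "Y = (\<lambda>\<omega>. restrict (\<lambda>k. X k \<omega>) (-{i}))"
  have Y: "Y \<in> measurable M S"
    unfolding S_def Y_def using assms(2) by measurable
  have Y_replaced: "(\<lambda>\<omega>. restrict (\<lambda>k. (if k = i then Xt else X k) \<omega>) (-{i})) = Y"
    by (auto simp: Y_def restrict_def fun_eq_iff)
  have law_X: "distr M (S \<Otimes>\<^sub>M borel) (\<lambda>\<omega>. (Y \<omega>, X i \<omega>)) = distr M S Y \<Otimes>\<^sub>M distr M borel (X i)"
    unfolding S_def Y_def by (rule indep_vars_distr_Compl_component[OF assms(4)])
  have law_Xt: "distr M (S \<Otimes>\<^sub>M borel) (\<lambda>\<omega>. (Y \<omega>, Xt \<omega>)) = distr M S Y \<Otimes>\<^sub>M distr M borel Xt"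
    using indep_vars_distr_Compl_component[OF assms(5), of i]
    unfolding S_def Y_replaced[symmetric] by simp
  have "dcx_le M (\<lambda>\<omega>. aggregate_with f i (Y \<omega>) (X i \<omega>)) (\<lambda>\<omega>. aggregate_with f i (Y \<omega>) (Xt \<omega>))"
    using dcx_le_product_law_mixture[OF Y assms(2,3) law_X law_Xt assms(7)
        aggregate_with_borel_measurable[where f=f and i=i, OF assms(6), folded S_def]]
      dir_convex_compose_aggregate_with[where f=f, OF _ assms(6)]
    by simp
  moreover have "aggregate_with f i (Y \<omega>) (X i \<omega>) = (\<chi> j. f j (\<chi> k. X k \<omega> $ j))"
    and "aggregate_with f i (Y \<omega>) (Xt \<omega>) = (\<chi> j. f j (\<chi> k. if k = i then Xt \<omega> $ j else X k \<omega> $ j))"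
    for \<omega>
    unfolding aggregate_with_def Y_def by (auto simp: vec_eq_iff intro!: arg_cong[where f="f _"])
  ultimately have dcx: "dcx_le M (\<lambda>\<omega>. \<chi> j. f j (\<chi> k. X k \<omega> $ j))
      (\<lambda>\<omega>. \<chi> j. f j (\<chi> k. if k = i then Xt \<omega> $ j else X k \<omega> $ j))"
    by simp
  then show ?thesis
    using cx_le_weighted_sum_if_dcx_le[OF dcx] by auto
qed

end
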